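(* Let $p\ge2$. There exist admissible constants $c,C_{6.1}>0$ such that, whenever $h<c$, $\delta^2<h$, $M^{-2/d}<h$ and $\rho\ge1$, $$\sup_{0\le i\le N}\sup_{x\in\mathcal C_i}|\bar u(t_i,x)|^2\le C_{6.1}.$$
   Context: Standing setting. Fix $d\in\mathbb N^*$, $T>0$ and functions $b:\mathbb R^d\times\mathbb R\times\mathbb R^d\to\mathbb R^d$, $f:\mathbb R^d\times\mathbb R\times\mathbb R^d\to\mathbb R$, $\sigma:\mathbb R^d\times\mathbb R\to\mathbb R^{d\times d}$, $H:\mathbb R^d\to\mathbb R$ satisfying Assumption (A): $b,f,\sigma,H$ are uniformly Lipschitz continuous in all variables; $b,f,\sigma$ are bounded in the space variable $x$ and have at most linear growth in the other variables, i.e. $|b(x,y,z)|+|f(x,y,z)|+|\sigma(x,y)|\le\Lambda(1+|y|+|z|)$; $a=\sigma\sigma^*$ is uniformly elliptic; and $H$ is bounded in $C^{2+\alpha}(\mathbb R^d)$ for some $\alpha\in(0,1)$. Let $(\Omega,\mathcal F,\mathbb P)$ carry a $d$-dimensional Brownian motion $B$ with augmented natural filtration $(\mathcal F_t)$. Discretization: $N\in\mathbb N^*$, $h=T/N$, $t_k=kh$, $\Delta B^k=B_{t_{k+1}}-B_{t_k}$. Quantization: $M\in\mathbb N^*$, a grid $\Lambda(M)=\{y_1,\dots,y_M\}\subset\mathbb R^d$ with nearest-neighbour projection $G_{\Lambda(M)}$, and $g(\Delta B^k):=h^{1/2}G_{\Lambda(M)}(h^{-1/2}\Delta B^k)$;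 it is assumed that for every $q\ge1$ there is $C_{\rm Quantiz}(q,d)$ with $\mathbb E[|g(\Delta B^k)-\Delta B^k|^q]^{1/q}\le C_{\rm Quantiz}(q,d)h^{1/2}M^{-1/d}$. Spatial grids: $\delta>0$, $\mathcal C_\infty=\delta\mathbb Z^d$, $\Pi_\infty(x)$ the point with coordinates $\delta\lfloor\delta^{-1}x_j+1/2\rfloor$; $R>0$, $\rho\ge1$, $r_0=R$, $r_i=R+\rho$ for $1\le i\le N$; $\Delta_i=\{x\in\mathbb R^d:-\delta\lfloor r_i/\delta\rfloor-\delta/2\le x_j<\delta\lfloor r_i/\delta\rfloor+\delta/2,\ j=1,\dots,d\}$, $\mathcal C_i=\mathcal C_\infty\cap\Delta_i$; $\mathcal Q(r,y)=\big((y_j\vee(-\delta\lfloor r/\delta\rfloor))\wedge\delta\lfloor r/\delta\rfloor\big)_{1\le j\le d}$; $\Pi_i(x)=\mathcal Q(r_i,\Pi_\infty(x))$ (so $\Pi_i(x)=\Pi_\infty(x)$ for $x\in\Delta_i$). Algorithm: for $x\in\mathcal C_N$, $\bar u(T,x)=H(x)$, $\bar v(T,x)=\nabla_xH(x)\sigma(x,H(x))$; for $k=N-1,\dots,0$ and $x\in\mathcal C_k$: $\mathcal T^0(t_k,x)=\sigma(x,\bar u(t_{k+1},x))g(\Delta B^k)$; $\hat v(t_k,x)=\mathbb E[\bar v(t_{k+1},\Pi_{k+1}(x+\mathcal T^0(t_k,x)))]$; $\mathcal T(t_k,x)=b(x,\bar u(t_{k+1},x),\hat v(t_k,x))h+\sigma(x,\bar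 u(t_{k+1},x))g(\Delta B^k)$; $\bar v(t_k,x)=h^{-1}\mathbb E[\bar u(t_{k+1},\Pi_{k+1}(x+\mathcal T(t_k,x)))g(\Delta B^k)]$; $\bar u(t_k,x)=\mathbb E[\bar u(t_{k+1},\Pi_{k+1}(x+\mathcal T(t_k,x)))]+f(x,\bar u(t_{k+1},x),\bar v(t_k,x))h$. A constant is called admissible if it depends only on $p$, $T$, $d$, the constants in Assumption (A) and the constants $C_{\rm Quantiz}(\cdot,d)$ (not on $h,\delta,M,R,\rho$, the starting point or the time index). *)

theory Defs
  imports "HOL-Probability.Probability"
begin

(* Standard Gaussian measure on R^d = real^'d; h^{-1/2} Delta B^k has this law. *)
definition gauss :: "(real^'d::finite) measure" where
  "gauss = density lborel
     (\<lambda>z. ennreal ((2 * pi) powr (- real CARD('d) / 2) * exp (- (norm z)\<^sup>2 / 2)))"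

definition nn_proj :: "(real^'d::finite) list \<Rightarrow> real^'d \<Rightarrow> real^'d" where
  "nn_proj ys x = ys ! (LEAST i. i < length ys \<and>
       (\<forall>j < length ys. dist x (ys ! i) \<le> dist x (ys ! j)))"

(* quantized increment g(Delta B) = h^{1/2} G(h^{-1/2} Delta B), with Delta B = h^{1/2} z *)
definition gq :: "(real^'d::finite) list \<Rightarrow> real \<Rightarrow> real^'d \<Rightarrow> real^'d" where
  "gq ys h z = sqrt h *\<^sub>R nn_proj ys z"

definition partial :: "(real^'d::finite \<Rightarrow> real) \<Rightarrow> 'd \<Rightarrow> real^'d \<Rightarrow> real" where
  "partial F j x = frechet_derivative F (at x) (axis j 1)"

definition grad :: "(real^'d::finite \<Rightarrow> real) \<Rightarrow> real^'d \<Rightarrow> real^'d" where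
  "grad F x = (\<chi> j. partial F j x)"

definition C2alpha_bounded :: "(real^'d::finite \<Rightarrow> real) \<Rightarrow> real \<Rightarrow> real \<Rightarrow> bool" where
  "C2alpha_bounded F \<alpha> K \<longleftrightarrow>
     (\<forall>x. F differentiable (at x)) \<and>
     (\<forall>j x. partial F j differentiable (at x)) \<and>
     (\<forall>x. \<bar>F x\<bar> \<le> K) \<and>
     (\<forall>j x. \<bar>partial F j x\<bar> \<le> K) \<and>
     (\<forall>i j x. \<bar>partial (partial F j) i x\<bar> \<le> K) \<and>
     (\<forall>i j x y. \<bar>partial (partial F j) i x - partial (partial F j) i y\<bar> \<le> K * norm (x - y) powr \<alpha>)"

definition assumption_A ::
  "(real^'d::finite \<Rightarrow> real \<Rightarrow> real^'d \<Rightarrow> real^'d) \<Rightarrow> (real^'d \<Rightarrow> real \<Rightarrow> real^'d \<Rightarrow> real) \<Rightarrow>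
   (real^'d \<Rightarrow> real \<Rightarrow> real^'d^'d) \<Rightarrow> (real^'d \<Rightarrow> real) \<Rightarrow>
   real \<Rightarrow> real \<Rightarrow> real \<Rightarrow> real \<Rightarrow> real \<Rightarrow> bool" where
  "assumption_A b f \<sigma> H L Lam lam \<alpha> K \<longleftrightarrow>
     (\<forall>x y z x' y' z'. norm (b x y z - b x' y' z') \<le> L * (norm (x - x') + \<bar>y - y'\<bar> + norm (z - z'))) \<and>
     (\<forall>x y z x' y' z'. \<bar>f x y z - f x' y' z'\<bar> \<le> L * (norm (x - x') + \<bar>y - y'\<bar> + norm (z - z'))) \<and>
     (\<forall>x y x' y'. norm (\<sigma> x y - \<sigma> x' y') \<le> L * (norm (x - x') + \<bar>y - y'\<bar>)) \<and>
     (\<forall>x x'. \<bar>H x - H x'\<bar> \<le> L * norm (x - x')) \<and>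
     (\<forall>x y z. norm (b x y z) + \<bar>f x y z\<bar> + norm (\<sigma> x y) \<le> Lam * (1 + \<bar>y\<bar> + norm z)) \<and>
     (\<forall>x y \<xi>. \<xi> \<bullet> ((\<sigma> x y ** transpose (\<sigma> x y)) *v \<xi>) \<ge> lam * (norm \<xi>)\<^sup>2) \<and>
     C2alpha_bounded H \<alpha> K"

definition Pi_inf :: "real \<Rightarrow> real^'d::finite \<Rightarrow> real^'d" where
  "Pi_inf \<delta> x = (\<chi> j. \<delta> * real_of_int \<lfloor>x $ j / \<delta> + 1/2\<rfloor>)"

definition rad :: "real \<Rightarrow> real \<Rightarrow> nat \<Rightarrow> real" where
  "rad R \<rho> i = (if i = 0 then R else R + \<rho>)"

definition Delta_box :: "real \<Rightarrow> real \<Rightarrow> (real^'d::finite) set" where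
  "Delta_box \<delta> r = {x. \<forall>j. - \<delta> * real_of_int \<lfloor>r / \<delta>\<rfloor> - \<delta> / 2 \<le> x $ j
                          \<and> x $ j < \<delta> * real_of_int \<lfloor>r / \<delta>\<rfloor> + \<delta> / 2}"

definition C_inf :: "real \<Rightarrow> (real^'d::finite) set" where
  "C_inf \<delta> = {x. \<forall>j. \<exists>m::int. x $ j = \<delta> * real_of_int m}"

definition C_grid :: "real \<Rightarrow> real \<Rightarrow> real \<Rightarrow> nat \<Rightarrow> (real^'d::finite) set" where
  "C_grid \<delta> R \<rho> i = C_inf \<delta> \<inter> Delta_box \<delta> (rad R \<rho> i)"

definition Qproj :: "real \<Rightarrow> real \<Rightarrow> real^'d::finite \<Rightarrow> real^'d" where
  "Qproj \<delta> r y = (\<chi> j. min (max (y $ j) (- \<delta> * real_of_int \<lfloor>r / \<delta>\<rfloor>)) (\<delta> * real_of_int \<lfloor>r / \<delta>\<rfloor>))"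

definition Pi_grid :: "real \<Rightarrow> real \<Rightarrow> real \<Rightarrow> nat \<Rightarrow> real^'d::finite \<Rightarrow> real^'d" where
  "Pi_grid \<delta> R \<rho> i x = Qproj \<delta> (rad R \<rho> i) (Pi_inf \<delta> x)"

(* The scheme, indexed by j = number of backward steps: sch ... j = (ubar(t_{N-j},.), vbar(t_{N-j},.)).
   Expectations over g(Delta B^k) are integrals against the standard Gaussian z, Delta B^k = sqrt h z. *)
primrec sch ::
  "(real^'d::finite \<Rightarrow> real \<Rightarrow> real^'d \<Rightarrow> real^'d) \<Rightarrow> (real^'d \<Rightarrow> real \<Rightarrow> real^'d \<Rightarrow> real) \<Rightarrow>
   (real^'d \<Rightarrow> real \<Rightarrow> real^'d^'d) \<Rightarrow> (real^'d \<Rightarrow> real) \<Rightarrow> real \<Rightarrow> nat \<Rightarrow> (real^'d) list \<Rightarrow>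
   real \<Rightarrow> real \<Rightarrow> real \<Rightarrow> nat \<Rightarrow> (real^'d \<Rightarrow> real) \<times> (real^'d \<Rightarrow> real^'d)" where
  "sch b f \<sigma> H T N ys \<delta> R \<rho> 0 = (H, \<lambda>x. grad H x v* \<sigma> x (H x))"
| "sch b f \<sigma> H T N ys \<delta> R \<rho> (Suc j) =
    (case sch b f \<sigma> H T N ys \<delta> R \<rho> j of (u1, v1) \<Rightarrow>
      (let h = T / real N;
           k = N - Suc j;
           P = Pi_grid \<delta> R \<rho> (Suc k);
           T0 = (\<lambda>x z. \<sigma> x (u1 x) *v gq ys h z);
           vhat = (\<lambda>x. \<integral>z. v1 (P (x + T0 x z)) \<partial>gauss);
           Tk = (\<lambda>x z. h *\<^sub>R b x (u1 x) (vhat x) + \<sigma> x (u1 x) *v gq ys h z);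
           vnew = (\<lambda>x. (1 / h) *\<^sub>R (\<integral>z. u1 (P (x + Tk x z)) *\<^sub>R gq ys h z \<partial>gauss));
           unew = (\<lambda>x. (\<integral>z. u1 (P (x + Tk x z)) \<partial>gauss) + f x (u1 x) (vnew x) * h)
       in (unew, vnew)))"

definition ubar ::
  "(real^'d::finite \<Rightarrow> real \<Rightarrow> real^'d \<Rightarrow> real^'d) \<Rightarrow> (real^'d \<Rightarrow> real \<Rightarrow> real^'d \<Rightarrow> real) \<Rightarrow>
   (real^'d \<Rightarrow> real \<Rightarrow> real^'d^'d) \<Rightarrow> (real^'d \<Rightarrow> real) \<Rightarrow> real \<Rightarrow> nat \<Rightarrow> (real^'d) list \<Rightarrow>
   real \<Rightarrow> real \<Rightarrow> real \<Rightarrow> nat \<Rightarrow> real^'d \<Rightarrow> real" where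
  "ubar b f \<sigma> H T N ys \<delta> R \<rho> k = fst (sch b f \<sigma> H T N ys \<delta> R \<rho> (N - k))"

end

theory Submission
  imports Defs
begin

(* One backward step reads ubar_k(x) = E U + f(x, y, vbar) h, where U = ubar_{k+1}(Pi(x + T(x))),
   y = ubar_{k+1}(x) and h vbar = E[U g] for the quantized increment g.  Splitting
   E[U g] = E[(U - E U) g] + E U E g, Cauchy-Schwarz and the moment bounds E|g|^2 <= c2 h and
   |E g| <= c1 h (which follow from the quantization hypothesis and the Gaussian moments) give
   h |vbar|^2 <= 2 c2 Var U + 2 c1^2 h (E U)^2.  As (E U)^2 + Var U <= sup ubar_{k+1}^2 =: A,
   Young's inequality with weight 12 Lam^2 c2 + 1 lets the variance absorb the contribution of
   vbar to the linear growth of f, so the new supremum is at most A + C h (A + 1) once h is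
   small, and the discrete Gronwall lemma yields sup ubar_k^2 + 1 <= (K^2 + 1) e^(C T).
   Only the growth of f and the bound on H enter, and the bound holds at every point of R^d. *)

lemma power2_norm_eq_sum_Basis: "(norm z)\<^sup>2 = (\<Sum>b\<in>Basis. (z \<bullet> b)\<^sup>2)"
  unfolding power2_norm_eq_inner euclidean_inner[of z z] by (simp add: power2_eq_square)

lemma norm_add_sq_le:
  fixes x y :: "'a::real_normed_vector"
  shows "(norm (x + y))\<^sup>2 \<le> 2 * (norm x)\<^sup>2 + 2 * (norm y)\<^sup>2"
proof -
  have "(norm (x + y))\<^sup>2 \<le> (norm x + norm y)\<^sup>2"
    by (simp add: norm_triangle_ineq power_mono)
  also have "\<dots> \<le> 2 * (norm x)\<^sup>2 + 2 * (norm y)\<^sup>2"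
    using zero_le_power2[of "norm x - norm y"] unfolding power2_diff power2_sum by linarith
  finally show ?thesis .
qed

lemma square_sum3_le: "(p + q + r)\<^sup>2 \<le> 3 * (p\<^sup>2 + q\<^sup>2 + (r::real)\<^sup>2)"
  using zero_le_power2[of "p - q"] zero_le_power2[of "q - r"] zero_le_power2[of "p - r"]
  by (simp add: power2_eq_square algebra_simps)

lemma power_one_plus_le_exp:
  assumes "0 \<le> a" "0 < T" "1 \<le> N" "i \<le> N"
  shows "(1 + a * (T / real N)) ^ (N - i) \<le> exp (a * T)"
proof -
  have "(1 + a * (T / real N)) ^ (N - i) \<le> (1 + a * (T / real N)) ^ N"
    using assms by (intro power_increasing) auto
  also have "\<dots> = (1 + a * T / real N) ^ N"
    by simp
  also have "\<dots> \<le> exp (a * T)"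
    using assms by (intro exp_ge_one_plus_x_over_n_power_n) (auto intro: order_trans[of _ 0])
  finally show ?thesis .
qed

lemma Cauchy_Schwarz_integral:
  fixes f g :: "'a \<Rightarrow> real"
  assumes [measurable]: "f \<in> borel_measurable M" "g \<in> borel_measurable M"
    and f2: "integrable M (\<lambda>x. (f x)\<^sup>2)" and g2: "integrable M (\<lambda>x. (g x)\<^sup>2)"
  shows "(\<integral>x. f x * g x \<partial>M)\<^sup>2 \<le> (\<integral>x. (f x)\<^sup>2 \<partial>M) * (\<integral>x. (g x)\<^sup>2 \<partial>M)"
proof -
  have nn_sq: "(\<integral>\<^sup>+x. ennreal \<bar>\<phi> x\<bar> ^ 2 \<partial>M) = ennreal (\<integral>x. (\<phi> x)\<^sup>2 \<partial>M)"
    if "integrable M (\<lambda>x. (\<phi> x)\<^sup>2)" for \<phi> :: "'a \<Rightarrow> real"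
    using nn_integral_eq_integral[OF that] by (simp add: ennreal_power)
  have CS: "(\<integral>\<^sup>+x. ennreal \<bar>f x * g x\<bar> \<partial>M)\<^sup>2
            \<le> ennreal ((\<integral>x. (f x)\<^sup>2 \<partial>M) * (\<integral>x. (g x)\<^sup>2 \<partial>M))"
    using Cauchy_Schwarz_nn_integral[of "\<lambda>x. ennreal \<bar>f x\<bar>" M "\<lambda>x. ennreal \<bar>g x\<bar>"]
    by (simp add: nn_sq f2 g2 abs_mult ennreal_mult)
  then have "(\<integral>\<^sup>+x. ennreal \<bar>f x * g x\<bar> \<partial>M)\<^sup>2 < \<top>"
    using ennreal_less_top by (rule le_less_trans)
  then have "integrable M (\<lambda>x. f x * g x)"
    by (intro integrableI_bounded) (simp_all add: power_less_top_ennreal)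
  then have "ennreal ((\<integral>x. \<bar>f x * g x\<bar> \<partial>M)\<^sup>2) \<le> ennreal ((\<integral>x. (f x)\<^sup>2 \<partial>M) * (\<integral>x. (g x)\<^sup>2 \<partial>M))"
    using CS by (simp add: nn_integral_eq_integral ennreal_power[symmetric])
  then have "(\<integral>x. \<bar>f x * g x\<bar> \<partial>M)\<^sup>2 \<le> (\<integral>x. (f x)\<^sup>2 \<partial>M) * (\<integral>x. (g x)\<^sup>2 \<partial>M)"
    by (simp add: ennreal_le_iff integral_nonneg)
  moreover have "\<bar>\<integral>x. f x * g x \<partial>M\<bar>\<^sup>2 \<le> (\<integral>x. \<bar>f x * g x\<bar> \<partial>M)\<^sup>2"
    by (intro power_mono integral_abs_bound) simp
  ultimately show ?thesis
    by simp
qed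

section \<open>The standard Gaussian measure\<close>

lemma gauss_eq_density_prod:
  "(gauss :: (real^'d::finite) measure) =
     density lborel (\<lambda>z. \<Prod>b\<in>Basis. ennreal (std_normal_density (z \<bullet> b)))"
proof -
  have "(2 * pi) powr (- real CARD('d) / 2) * exp (- (norm z)\<^sup>2 / 2)
        = (\<Prod>b\<in>Basis. std_normal_density (z \<bullet> b))" for z :: "real^'d"
  proof -
    have "(2 * pi) powr (- real CARD('d) / 2) = (\<Prod>b\<in>(Basis :: (real^'d) set). 1 / sqrt (2 * pi))"
    proof -
      have "(2 * pi) powr (real CARD('d) / 2) = ((2 * pi) powr (1 / 2)) powr real CARD('d)"
        by (simp add: powr_powr)
      then show ?thesis
        by (simp add: powr_minus_divide powr_half_sqrt powr_realpow power_one_over)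
    qed
    moreover have "exp (- (norm z)\<^sup>2 / 2) = (\<Prod>b\<in>Basis. exp (- (z \<bullet> b)\<^sup>2 / 2))"
      by (simp add: power2_norm_eq_sum_Basis exp_sum[symmetric] sum_negf sum_divide_distrib)
    ultimately show ?thesis
      unfolding std_normal_density_def prod.distrib by simp
  qed
  then show ?thesis
    by (simp add: gauss_def prod_ennreal)
qed

lemma sets_gauss [measurable_cong, simp]: "sets gauss = sets borel"
  by (simp add: gauss_def)

lemma measurable_gauss_iff: "measurable gauss N = measurable borel N"
  by (rule measurable_cong_sets) simp_all

lemma nn_integral_std_normal_density: "(\<integral>\<^sup>+x. ennreal (std_normal_density x) \<partial>lborel) = 1"
  using prob_space.emeasure_space_1[OF prob_space_normal_density[of 1 0]]
  by (simp add: emeasure_density)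

lemma prob_space_gauss: "prob_space (gauss :: (real^'d::finite) measure)"
proof
  have "emeasure (gauss :: (real^'d) measure) (space gauss) =
        (\<integral>\<^sup>+z. (\<Prod>b\<in>(Basis :: (real^'d) set). ennreal (std_normal_density (z \<bullet> b))) \<partial>lborel)"
    by (simp add: gauss_eq_density_prod emeasure_density)
  also have "\<dots> = (\<Prod>b\<in>(Basis :: (real^'d) set). \<integral>\<^sup>+x. ennreal (std_normal_density x) \<partial>lborel)"
    by (rule nn_integral_lborel_prod) auto
  also have "\<dots> = 1"
    by (simp add: nn_integral_std_normal_density)
  finally show "emeasure (gauss :: (real^'d) measure) (space gauss) = 1" .
qed

lemma nn_integral_gauss_component_power:
  fixes c :: "real^'d::finite"
  assumes c: "c \<in> Basis"
  shows "(\<integral>\<^sup>+z. ennreal (\<bar>z \<bullet> c\<bar> ^ k) \<partial>gauss)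
         = (\<integral>\<^sup>+x. ennreal (std_normal_density x * \<bar>x\<bar> ^ k) \<partial>lborel)"
proof -
  let ?\<phi> = "\<lambda>b x. std_normal_density x * (if b = c then \<bar>x\<bar> ^ k else 1)"
  have "(\<Prod>b\<in>Basis. ennreal (std_normal_density (z \<bullet> b))) * ennreal (\<bar>z \<bullet> c\<bar> ^ k)
        = (\<Prod>b\<in>Basis. ennreal (?\<phi> b (z \<bullet> b)))" for z :: "real^'d"
    using c by (simp add: prod_ennreal prod.distrib ennreal_mult[symmetric] prod.delta prod_nonneg)
  then have "(\<integral>\<^sup>+z. ennreal (\<bar>z \<bullet> c\<bar> ^ k) \<partial>gauss)
        = (\<integral>\<^sup>+z. (\<Prod>b\<in>Basis. ennreal (?\<phi> b (z \<bullet> b))) \<partial>lborel)"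
    by (simp add: gauss_eq_density_prod nn_integral_density)
  also have "\<dots> = (\<Prod>b\<in>Basis. \<integral>\<^sup>+x. ennreal (?\<phi> b x) \<partial>lborel)"
    by (rule nn_integral_lborel_prod) auto
  also have "\<dots> = (\<Prod>b\<in>Basis. if b = c then \<integral>\<^sup>+x. ennreal (std_normal_density x * \<bar>x\<bar> ^ k) \<partial>lborel else 1)"
    by (intro prod.cong) (simp_all add: nn_integral_std_normal_density)
  also have "\<dots> = (\<integral>\<^sup>+x. ennreal (std_normal_density x * \<bar>x\<bar> ^ k) \<partial>lborel)"
    using c by (simp add: prod.delta)
  finally show ?thesis .
qed

lemma integrable_gauss_component_power:
  fixes c :: "real^'d::finite"
  assumes "c \<in> Basis"
  shows "integrable gauss (\<lambda>z. (z \<bullet> c) ^ k)"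
proof (rule integrableI_bounded)
  show "(\<integral>\<^sup>+z. ennreal (norm ((z \<bullet> c) ^ k)) \<partial>gauss) < \<infinity>"
    using nn_integral_gauss_component_power[OF assms, of k] integrable_std_normal_moment_abs[of k]
    by (simp add: power_abs integrable_iff_bounded abs_mult)
qed simp

lemma integral_gauss_component_sq:
  fixes c :: "real^'d::finite"
  assumes "c \<in> Basis"
  shows "(\<integral>z. (z \<bullet> c)\<^sup>2 \<partial>gauss) = 1"
proof -
  have "ennreal (\<integral>z. (z \<bullet> c)\<^sup>2 \<partial>gauss) = (\<integral>\<^sup>+z. ennreal (\<bar>z \<bullet> c\<bar> ^ 2) \<partial>gauss)"
    using integrable_gauss_component_power[OF assms, of 2] by (simp add: nn_integral_eq_integral)
  also have "\<dots> = ennreal (\<integral>x. std_normal_density x * x ^ (2 * 1) \<partial>lborel)"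
    using nn_integral_gauss_component_power[OF assms, of 2] integrable_std_normal_moment[of 2]
    by (simp add: nn_integral_eq_integral)
  also have "\<dots> = 1"
    by (simp only: integral_std_normal_moment_even) simp
  finally show ?thesis
    by simp
qed

lemma integrable_gauss_norm_sq: "integrable gauss (\<lambda>z::real^'d::finite. (norm z)\<^sup>2)"
  by (simp add: power2_norm_eq_sum_Basis integrable_gauss_component_power)

lemma integral_gauss_norm_sq: "(\<integral>z. (norm (z::real^'d::finite))\<^sup>2 \<partial>gauss) = real CARD('d)"
  by (simp add: power2_norm_eq_sum_Basis integrable_gauss_component_power integral_gauss_component_sq)

lemma integrable_gauss_id: "integrable gauss (\<lambda>z::real^'d::finite. z)"
proof -
  have "integrable gauss (\<lambda>z::real^'d. \<Sum>b\<in>Basis. (z \<bullet> b) *\<^sub>R b)"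
    by (intro Bochner_Integration.integrable_sum integrable_scaleR_left)
      (use integrable_gauss_component_power[where k = 1] in simp)
  then show ?thesis
    by (simp add: euclidean_representation)
qed

lemma integral_gauss_reflect:
  fixes F :: "real^'d::finite \<Rightarrow> 'b::{banach, second_countable_topology}"
  assumes [measurable]: "F \<in> borel_measurable borel"
  shows "(\<integral>z. F (- z) \<partial>gauss) = (\<integral>z. F z \<partial>gauss)"
proof -
  define g where "g z = (2 * pi) powr (- real CARD('d) / 2) * exp (- (norm z)\<^sup>2 / 2)" for z :: "real^'d"
  have gauss_g: "gauss = density lborel (\<lambda>z. ennreal (g z))"
    by (simp add: gauss_def g_def)
  have "(\<integral>z. F z \<partial>gauss) = (\<integral>z. g z *\<^sub>R F z \<partial>distr lborel borel uminus)"
    unfolding gauss_g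
    by (subst lborel_affine[of "-1" 0]) (simp_all add: integral_density g_def density_1)
  also have "\<dots> = (\<integral>z. F (- z) \<partial>gauss)"
    unfolding gauss_g by (simp add: integral_distr integral_density g_def)
  finally show ?thesis ..
qed

lemma integral_gauss_id: "(\<integral>z. z \<partial>gauss) = (0 :: real^'d::finite)"
proof -
  have "(\<integral>z. z \<partial>gauss) = - (\<integral>z. z \<partial>(gauss :: (real^'d) measure))"
    using integral_gauss_reflect[of "\<lambda>z::real^'d. - z"] by (simp add: integral_minus)
  then have "(2::real) *\<^sub>R (\<integral>z. z \<partial>(gauss :: (real^'d) measure)) = 0"
    unfolding scaleR_2 by (metis add.right_inverse)
  then show ?thesis
    by simp
qed

section \<open>Quantized increments\<close>

lemma nn_proj_in_set:
  assumes "ys \<noteq> []"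
  shows "nn_proj ys z \<in> set ys"
proof -
  let ?closest = "\<lambda>i. i < length ys \<and> (\<forall>j < length ys. dist z (ys ! i) \<le> dist z (ys ! j))"
  define i where "i = arg_min_on (\<lambda>i. dist z (ys ! i)) {..<length ys}"
  have "?closest i"
    using arg_min_if_finite[of "{..<length ys}" "\<lambda>i. dist z (ys ! i)"] assms
    by (auto simp: i_def not_less)
  then have "?closest (LEAST i. ?closest i)"
    by (rule LeastI)
  then show ?thesis
    by (simp add: nn_proj_def)
qed

lemma norm_nn_proj_le: "ys \<noteq> [] \<Longrightarrow> norm (nn_proj ys z) \<le> (\<Sum>w\<in>set ys. norm w)"
  using nn_proj_in_set by (intro member_le_sum) auto

(* nn_proj ys takes only finitely many values, so \<Phi> need not be measurable. *)
lemma measurable_comp_nn_proj: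
  "(\<lambda>z. \<Phi> (nn_proj ys z)) \<in> measurable borel (borel :: 'b::topological_space measure)"
proof -
  have "(\<lambda>z. LEAST i. i < length ys \<and> (\<forall>j < length ys. dist z (ys ! i) \<le> dist z (ys ! j)))
          \<in> measurable borel (count_space UNIV)"
    by measurable
  then have "(\<lambda>i. \<Phi> (ys ! i)) \<circ> (\<lambda>z. LEAST i. i < length ys \<and>
               (\<forall>j < length ys. dist z (ys ! i) \<le> dist z (ys ! j))) \<in> measurable borel borel"
    by (rule measurable_comp) simp
  then show ?thesis
    by (simp add: nn_proj_def comp_def)
qed

lemma measurable_comp_gq:
  "(\<lambda>z. \<Phi> (gq ys h z)) \<in> measurable gauss (borel :: 'b::topological_space measure)"
  unfolding measurable_gauss_iff gq_def by (rule measurable_comp_nn_proj)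

lemma norm_gq_le:
  "ys \<noteq> [] \<Longrightarrow> norm (gq ys h z) \<le> \<bar>sqrt h\<bar> * (\<Sum>w\<in>set ys. norm w)"
  unfolding gq_def using norm_nn_proj_le[of ys z] by (simp add: mult_left_mono)

lemma integrable_gq:
  assumes "ys \<noteq> []"
  shows "integrable gauss (\<lambda>z. gq ys h z)" and "integrable gauss (\<lambda>z. (norm (gq ys h z))\<^sup>2)"
proof -
  interpret prob_space gauss by (rule prob_space_gauss)
  let ?B = "\<bar>sqrt h\<bar> * (\<Sum>w\<in>set ys. norm w)"
  show "integrable gauss (\<lambda>z. gq ys h z)"
    using norm_gq_le[OF assms] measurable_comp_gq[of "\<lambda>v. v"]
    by (intro integrable_const_bound[where B = ?B]) auto
  show "integrable gauss (\<lambda>z. (norm (gq ys h z))\<^sup>2)"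
    using norm_gq_le[OF assms] measurable_comp_gq[of "\<lambda>v. (norm v)\<^sup>2"]
    by (intro integrable_const_bound[where B = "?B\<^sup>2"]) (auto intro!: power_mono)
qed

context
  fixes ys :: "(real^'d::finite) list" and h :: real and Cq :: "real \<Rightarrow> real"
  assumes ys: "ys \<noteq> []" and h: "0 < h" "h \<le> 1"
    and quantization_error: "\<forall>q \<ge> 1. (\<integral>z. norm (gq ys h z - sqrt h *\<^sub>R z) powr q \<partial>gauss) powr (1 / q)
                 \<le> Cq q * sqrt h * real (length ys) powr (- 1 / real CARD('d))"
    and fine_quantization: "real (length ys) powr (- 2 / real CARD('d)) < h"
begin

lemma quantization_error_le:
  assumes "q \<ge> 1"
  shows "(\<integral>z. norm (gq ys h z - sqrt h *\<^sub>R z) powr q \<partial>gauss) powr (1 / q) \<le> \<bar>Cq q\<bar> * h"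
proof -
  define m where "m = real (length ys) powr (- 1 / real CARD('d))"
  have "m\<^sup>2 < h"
    using fine_quantization ys by (simp add: m_def power2_eq_square powr_add[symmetric])
  then have "m \<le> sqrt h"
    by (simp add: m_def real_le_rsqrt)
  have "(\<integral>z. norm (gq ys h z - sqrt h *\<^sub>R z) powr q \<partial>gauss) powr (1 / q) \<le> Cq q * sqrt h * m"
    using quantization_error assms by (simp add: m_def)
  also have "\<dots> \<le> \<bar>Cq q\<bar> * sqrt h * sqrt h"
    using \<open>m \<le> sqrt h\<close> h by (intro mult_mono) (auto simp: m_def)
  also have "\<dots> = \<bar>Cq q\<bar> * h"
    using h by (simp add: mult.assoc)
  finally show ?thesis .
qed

lemma norm_integral_gq_le: "norm (\<integral>z. gq ys h z \<partial>gauss) \<le> \<bar>Cq 1\<bar> * h"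
proof -
  have "(\<integral>z. gq ys h z - sqrt h *\<^sub>R z \<partial>gauss)
        = (\<integral>z. gq ys h z \<partial>gauss) - (\<integral>z. sqrt h *\<^sub>R z \<partial>gauss)"
    using integrable_gq(1)[OF ys] integrable_gauss_id
    by (intro Bochner_Integration.integral_diff) auto
  then have "(\<integral>z. gq ys h z \<partial>gauss) = (\<integral>z. gq ys h z - sqrt h *\<^sub>R z \<partial>gauss)"
    by (simp add: integral_gauss_id)
  also have "norm \<dots> \<le> (\<integral>z. norm (gq ys h z - sqrt h *\<^sub>R z) \<partial>gauss)"
    by (rule integral_norm_bound)
  also have "\<dots> \<le> \<bar>Cq 1\<bar> * h"
    using quantization_error_le[of 1] by simp
  finally show ?thesis .
qed

lemma integral_quantization_error_sq_le:
  "(\<integral>z. (norm (gq ys h z - sqrt h *\<^sub>R z))\<^sup>2 \<partial>gauss) \<le> (Cq 2)\<^sup>2 * h"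
proof -
  let ?I = "\<integral>z. (norm (gq ys h z - sqrt h *\<^sub>R z))\<^sup>2 \<partial>gauss"
  have "sqrt ?I \<le> \<bar>Cq 2\<bar> * h"
    using quantization_error_le[of 2] by (simp add: powr_half_sqrt)
  then have "(sqrt ?I)\<^sup>2 \<le> (\<bar>Cq 2\<bar> * h)\<^sup>2"
    by (intro power_mono) auto
  then have "?I \<le> (Cq 2)\<^sup>2 * h\<^sup>2"
    by (simp add: power_mult_distrib)
  also have "\<dots> \<le> (Cq 2)\<^sup>2 * h"
    using h by (intro mult_left_mono) (auto simp: power2_eq_square)
  finally show ?thesis .
qed

lemma integral_norm_gq_sq_le:
  "(\<integral>z. (norm (gq ys h z))\<^sup>2 \<partial>gauss) \<le> (2 * (Cq 2)\<^sup>2 + 2 * real CARD('d)) * h"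
proof -
  let ?E = "\<lambda>z. (norm (gq ys h z - sqrt h *\<^sub>R z))\<^sup>2"
  have sq_sqrt_h: "(norm (sqrt h *\<^sub>R z))\<^sup>2 = h * (norm z)\<^sup>2" for z :: "real^'d"
    using h by (simp add: power_mult_distrib)
  have integrable_E: "integrable gauss ?E"
  proof (rule Bochner_Integration.integrable_bound)
    show "integrable gauss (\<lambda>z. 2 * (norm (gq ys h z))\<^sup>2 + 2 * h * (norm z)\<^sup>2)"
      using integrable_gq(2)[OF ys] integrable_gauss_norm_sq
      by (intro Bochner_Integration.integrable_add integrable_mult_right)
    show "AE z in gauss. norm (?E z) \<le> norm (2 * (norm (gq ys h z))\<^sup>2 + 2 * h * (norm z)\<^sup>2)"
      using norm_add_sq_le[of "gq ys h z" "- sqrt h *\<^sub>R z" for z] sq_sqrt_h h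
      by (simp add: mult.assoc)
  qed (use measurable_comp_gq[of "\<lambda>v. v" ys h] in measurable)
  have "(\<integral>z. (norm (gq ys h z))\<^sup>2 \<partial>gauss) \<le> (\<integral>z. 2 * ?E z + 2 * h * (norm z)\<^sup>2 \<partial>gauss)"
    using integrable_gq(2)[OF ys] integrable_E integrable_gauss_norm_sq
      norm_add_sq_le[of "gq ys h z - sqrt h *\<^sub>R z" "sqrt h *\<^sub>R z" for z] sq_sqrt_h
    by (intro integral_mono) (auto simp: mult.assoc)
  also have "\<dots> = 2 * (\<integral>z. ?E z \<partial>gauss) + 2 * h * real CARD('d)"
  proof -
    have "(\<integral>z. 2 * ?E z + 2 * h * (norm z)\<^sup>2 \<partial>gauss)
          = (\<integral>z. 2 * ?E z \<partial>gauss) + (\<integral>z. 2 * h * (norm (z::real^'d))\<^sup>2 \<partial>gauss)"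
      using integrable_E integrable_gauss_norm_sq
      by (intro Bochner_Integration.integral_add integrable_mult_right)
    then show ?thesis
      by (simp add: integral_gauss_norm_sq)
  qed
  also have "\<dots> \<le> (2 * (Cq 2)\<^sup>2 + 2 * real CARD('d)) * h"
    using integral_quantization_error_sq_le by (simp add: algebra_simps)
  finally show ?thesis .
qed

end

section \<open>One step of the scheme\<close>

lemma square_add_mult_le:
  fixes a F h \<gamma> :: real
  assumes h: "0 < h" "h * \<gamma> \<le> 1" and \<gamma>: "1 \<le> \<gamma>"
  shows "(a + F * h)\<^sup>2 \<le> (1 + \<gamma> * h) * a\<^sup>2 + (2 * h / \<gamma>) * F\<^sup>2"
proof -
  have "0 \<le> (h / \<gamma>) * (\<gamma> * a - F)\<^sup>2"
    using h \<gamma> by simp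
  also have "\<dots> = \<gamma> * h * a\<^sup>2 + h * F\<^sup>2 / \<gamma> - 2 * a * F * h"
    using \<gamma> by (simp add: power2_eq_square field_simps)
  finally have young: "2 * a * F * h \<le> \<gamma> * h * a\<^sup>2 + h * F\<^sup>2 / \<gamma>"
    by simp
  have "h * (h + 1 / \<gamma>) \<le> h * (2 / \<gamma>)"
    using h \<gamma> by (intro mult_left_mono) (auto simp: field_simps)
  then have "h * (h + 1 / \<gamma>) * F\<^sup>2 \<le> (2 * h / \<gamma>) * F\<^sup>2"
    by (intro mult_right_mono) auto
  then show ?thesis
    using young by (simp add: power2_eq_square algebra_simps)
qed

lemma square_le_linear_growth:
  fixes F \<Lambda> y n :: real
  assumes "\<bar>F\<bar> \<le> \<Lambda> * (1 + \<bar>y\<bar> + n)"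
  shows "F\<^sup>2 \<le> 3 * \<Lambda>\<^sup>2 * (1 + y\<^sup>2 + n\<^sup>2)"
proof -
  have "F\<^sup>2 \<le> (\<Lambda> * (1 + \<bar>y\<bar> + n))\<^sup>2"
    using assms abs_ge_zero[of F] by (metis power2_abs power_mono)
  also have "\<dots> = \<Lambda>\<^sup>2 * (1 + \<bar>y\<bar> + n)\<^sup>2"
    by (rule power_mult_distrib)
  also have "\<dots> \<le> \<Lambda>\<^sup>2 * (3 * (1\<^sup>2 + \<bar>y\<bar>\<^sup>2 + n\<^sup>2))"
    by (intro mult_left_mono square_sum3_le) simp
  finally show ?thesis
    by (simp add: algebra_simps)
qed

lemma perturbed_square_le:
  fixes a W A y F n h \<Lambda> c1 c2 :: real
  defines "\<gamma> \<equiv> 12 * \<Lambda>\<^sup>2 * c2 + 1"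
  assumes aW: "a\<^sup>2 + W \<le> A" and W: "0 \<le> W" and y: "y\<^sup>2 \<le> A"
    and F: "\<bar>F\<bar> \<le> \<Lambda> * (1 + \<bar>y\<bar> + n)"
    and hn: "h * n\<^sup>2 \<le> 2 * c2 * W + 2 * c1\<^sup>2 * h * a\<^sup>2"
    and h: "0 < h" "h * \<gamma> \<le> 1" and c2: "0 \<le> c2"
  shows "(a + F * h)\<^sup>2 \<le> A + (\<gamma> + 12 * \<Lambda>\<^sup>2 * c1\<^sup>2 + 6 * \<Lambda>\<^sup>2) * h * (A + 1)"
proof -
  have \<gamma>: "1 \<le> \<gamma>"
    using c2 by (simp add: \<gamma>_def)
  have a: "a\<^sup>2 \<le> A"
    using aW W by linarith
  have "(2 * h / \<gamma>) * F\<^sup>2 \<le> (2 * h / \<gamma>) * (3 * \<Lambda>\<^sup>2 * (1 + y\<^sup>2 + n\<^sup>2))"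
    using square_le_linear_growth[OF F] h \<gamma> by (intro mult_left_mono) auto
  also have "\<dots> = (6 * \<Lambda>\<^sup>2 / \<gamma>) * (h + h * y\<^sup>2) + (6 * \<Lambda>\<^sup>2 / \<gamma>) * (h * n\<^sup>2)"
    using \<gamma> by (simp add: field_simps)
  moreover have "(6 * \<Lambda>\<^sup>2 / \<gamma>) * (h + h * y\<^sup>2) \<le> 6 * \<Lambda>\<^sup>2 * (h + h * A)"
    using h \<gamma> y mult_right_mono[OF \<gamma> zero_le_power2[of \<Lambda>]]
    by (intro mult_mono) (auto simp: field_simps)
  moreover have "(6 * \<Lambda>\<^sup>2 / \<gamma>) * (h * n\<^sup>2) \<le> W + 12 * \<Lambda>\<^sup>2 * c1\<^sup>2 * h * A"
  proof -
    have "(6 * \<Lambda>\<^sup>2 / \<gamma>) * (h * n\<^sup>2) \<le> (6 * \<Lambda>\<^sup>2 / \<gamma>) * (2 * c2 * W + 2 * c1\<^sup>2 * h * a\<^sup>2)"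
      using hn \<gamma> by (intro mult_left_mono) auto
    also have "\<dots> = (12 * \<Lambda>\<^sup>2 * c2 / \<gamma>) * W + (1 / \<gamma>) * (12 * \<Lambda>\<^sup>2 * c1\<^sup>2 * h * a\<^sup>2)"
      by (simp add: field_simps add_divide_distrib)
    also have "\<dots> \<le> 1 * W + 1 * (12 * \<Lambda>\<^sup>2 * c1\<^sup>2 * h * A)"
      using W \<gamma> a h by (intro add_mono mult_mono) (auto simp: \<gamma>_def field_simps)
    finally show ?thesis by simp
  qed
  moreover have "(1 + \<gamma> * h) * a\<^sup>2 \<le> a\<^sup>2 + \<gamma> * h * A"
    using a h \<gamma> by (simp add: algebra_simps)
  ultimately have "(a + F * h)\<^sup>2 \<le> a\<^sup>2 + W + \<gamma> * h * A + 12 * \<Lambda>\<^sup>2 * c1\<^sup>2 * h * A + 6 * \<Lambda>\<^sup>2 * (h + h * A)"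
    using square_add_mult_le[OF h \<gamma>, of a F] by linarith
  also have "\<dots> \<le> A + (\<gamma> + 12 * \<Lambda>\<^sup>2 * c1\<^sup>2 + 6 * \<Lambda>\<^sup>2) * h * (A + 1)"
  proof -
    have "0 \<le> \<gamma> * h" "0 \<le> h * (12 * (\<Lambda>\<^sup>2 * c1\<^sup>2))"
      using h \<gamma> by auto
    then show ?thesis
      using aW by (simp add: algebra_simps)
  qed
  finally show ?thesis .
qed

lemma (in prob_space) norm_expectation_scaleR_sq_le:
  fixes U :: "'a \<Rightarrow> real" and G :: "'a \<Rightarrow> 'b::{banach, second_countable_topology}"
  assumes [measurable]: "U \<in> borel_measurable M" "G \<in> borel_measurable M"
    and U: "\<And>z. \<bar>U z\<bar> \<le> BU" and G: "\<And>z. norm (G z) \<le> BG"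
  shows "(norm (expectation (\<lambda>z. U z *\<^sub>R G z)))\<^sup>2
         \<le> 2 * variance U * expectation (\<lambda>z. (norm (G z))\<^sup>2) + 2 * (expectation U)\<^sup>2 * (norm (expectation G))\<^sup>2"
proof -
  define a where "a = expectation U"
  define X where "X = expectation (\<lambda>z. \<bar>U z - a\<bar> * norm (G z))"
  have U_a: "\<bar>U z - a\<bar> \<le> BU + \<bar>a\<bar>" for z
    using U[of z] by linarith
  have U_a_sq: "(U z - a)\<^sup>2 \<le> (BU + \<bar>a\<bar>)\<^sup>2" for z
    using U_a[of z] by (metis abs_ge_zero power2_abs power_mono)
  have int_U: "integrable M U" "integrable M (\<lambda>z. (U z - a)\<^sup>2)"
    using U U_a_sq by (auto intro!: integrable_const_bound AE_I2)
  have G_sq: "(norm (G z))\<^sup>2 \<le> BG\<^sup>2" for z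
    using G[of z] by (intro power_mono) simp_all
  have int_G: "integrable M G" "integrable M (\<lambda>z. (norm (G z))\<^sup>2)"
    using G G_sq by (auto intro!: integrable_const_bound AE_I2)
  have int_UG: "integrable M (\<lambda>z. (U z - a) *\<^sub>R G z)"
    using U_a G by (intro integrable_const_bound[where B = "(BU + \<bar>a\<bar>) * BG"])
      (auto intro!: AE_I2 mult_mono intro: order_trans[OF abs_ge_zero])
  have X: "X\<^sup>2 \<le> variance U * expectation (\<lambda>z. (norm (G z))\<^sup>2)"
    using Cauchy_Schwarz_integral[of "\<lambda>z. \<bar>U z - a\<bar>" M "\<lambda>z. norm (G z)"] int_U int_G
    by (simp add: X_def a_def)
  have "(\<lambda>z. U z *\<^sub>R G z) = (\<lambda>z. (U z - a) *\<^sub>R G z + a *\<^sub>R G z)"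
    by (simp add: fun_eq_iff algebra_simps)
  then have "expectation (\<lambda>z. U z *\<^sub>R G z) = expectation (\<lambda>z. (U z - a) *\<^sub>R G z) + a *\<^sub>R expectation G"
    using int_UG int_G by simp
  then have "norm (expectation (\<lambda>z. U z *\<^sub>R G z)) \<le> X + \<bar>a\<bar> * norm (expectation G)"
    using integral_norm_bound[of M "\<lambda>z. (U z - a) *\<^sub>R G z"]
    by (auto simp: X_def intro!: norm_triangle_le add_mono)
  then have "(norm (expectation (\<lambda>z. U z *\<^sub>R G z)))\<^sup>2 \<le> (X + \<bar>a\<bar> * norm (expectation G))\<^sup>2"
    by (intro power_mono) auto
  also have "\<dots> \<le> 2 * X\<^sup>2 + 2 * (\<bar>a\<bar> * norm (expectation G))\<^sup>2"
    using norm_add_sq_le[of X "\<bar>a\<bar> * norm (expectation G)"] by simp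
  finally show ?thesis
    using X by (simp add: a_def power_mult_distrib)
qed

lemma (in prob_space) perturbed_mean_square_le:
  fixes U :: "'a \<Rightarrow> real" and G :: "'a \<Rightarrow> 'b::{banach, second_countable_topology}"
  assumes [measurable]: "U \<in> borel_measurable M" "G \<in> borel_measurable M"
    and U: "\<And>z. (U z)\<^sup>2 \<le> A" and G: "\<And>z. norm (G z) \<le> BG"
    and G2: "expectation (\<lambda>z. (norm (G z))\<^sup>2) \<le> c2 * h"
    and G1: "norm (expectation G) \<le> c1 * h"
    and y: "y\<^sup>2 \<le> A"
    and F: "\<bar>F\<bar> \<le> \<Lambda> * (1 + \<bar>y\<bar> + norm ((1 / h) *\<^sub>R expectation (\<lambda>z. U z *\<^sub>R G z)))"
    and h: "0 < h" "h * (12 * \<Lambda>\<^sup>2 * c2 + 1) \<le> 1" and c2: "0 \<le> c2"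
  shows "(expectation U + F * h)\<^sup>2 \<le> A + (12 * \<Lambda>\<^sup>2 * c2 + 1 + 12 * \<Lambda>\<^sup>2 * c1\<^sup>2 + 6 * \<Lambda>\<^sup>2) * h * (A + 1)"
proof (rule perturbed_square_le[OF _ variance_positive y F _ h c2])
  have U_abs: "\<bar>U z\<bar> \<le> sqrt A" for z
    using real_sqrt_le_mono[OF U[of z]] by simp
  have "integrable M U" "integrable M (\<lambda>z. (U z)\<^sup>2)"
    using U_abs U by (auto intro!: integrable_const_bound AE_I2)
  moreover have "expectation (\<lambda>z. (U z)\<^sup>2) \<le> A"
    using U integral_mono[of M "\<lambda>z. (U z)\<^sup>2" "\<lambda>_. A"] \<open>integrable M (\<lambda>z. (U z)\<^sup>2)\<close>
    by (simp add: prob_space)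
  ultimately show "(expectation U)\<^sup>2 + variance U \<le> A"
    by (simp add: variance_eq)
  have "(norm (expectation (\<lambda>z. U z *\<^sub>R G z)))\<^sup>2
        \<le> 2 * variance U * (c2 * h) + 2 * (expectation U)\<^sup>2 * (c1 * h)\<^sup>2"
  proof -
    have "2 * variance U * expectation (\<lambda>z. (norm (G z))\<^sup>2) \<le> 2 * variance U * (c2 * h)"
      using G2 variance_positive[of U] by (intro mult_left_mono) auto
    moreover have "(norm (expectation G))\<^sup>2 \<le> (c1 * h)\<^sup>2"
      using G1 by (intro power_mono) simp_all
    then have "2 * (expectation U)\<^sup>2 * (norm (expectation G))\<^sup>2 \<le> 2 * (expectation U)\<^sup>2 * (c1 * h)\<^sup>2"
      by (intro mult_left_mono) auto
    ultimately show ?thesis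
      using norm_expectation_scaleR_sq_le[OF assms(1,2) U_abs G] by linarith
  qed
  then show "h * (norm ((1 / h) *\<^sub>R expectation (\<lambda>z. U z *\<^sub>R G z)))\<^sup>2
        \<le> 2 * c2 * variance U + 2 * c1\<^sup>2 * h * (expectation U)\<^sup>2"
    using h by (simp add: power2_eq_square field_simps)
qed

section \<open>Stability of the scheme\<close>

lemma fst_sch_Suc:
  "fst (sch b f \<sigma> H T N ys \<delta> R \<rho> (Suc j)) x =
    (let u = fst (sch b f \<sigma> H T N ys \<delta> R \<rho> j); h = T / real N;
         P = Pi_grid \<delta> R \<rho> (Suc (N - Suc j));
         w = (\<integral>z. snd (sch b f \<sigma> H T N ys \<delta> R \<rho> j) (P (x + \<sigma> x (u x) *v gq ys h z)) \<partial>gauss);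
         U = (\<lambda>z. u (P (x + (h *\<^sub>R b x (u x) w + \<sigma> x (u x) *v gq ys h z))))
     in (\<integral>z. U z \<partial>gauss) + f x (u x) ((1 / h) *\<^sub>R (\<integral>z. U z *\<^sub>R gq ys h z \<partial>gauss)) * h)"
  by (simp only: sch.simps(2) Let_def case_prod_unfold fst_conv)

lemma assumption_A_f_growth:
  assumes "assumption_A b f \<sigma> H L \<Lambda> lam \<alpha> K"
  shows "\<bar>f x y v\<bar> \<le> \<Lambda> * (1 + \<bar>y\<bar> + norm v)"
proof -
  have "norm (b x y v) + \<bar>f x y v\<bar> + norm (\<sigma> x y) \<le> \<Lambda> * (1 + \<bar>y\<bar> + norm v)"
    using assms unfolding assumption_A_def by blast
  then show ?thesis
    using norm_ge_zero[of "b x y v"] norm_ge_zero[of "\<sigma> x y"] by linarith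
qed

lemma assumption_A_H_bounded:
  assumes "assumption_A b f \<sigma> H L \<Lambda> lam \<alpha> K"
  shows "(H x)\<^sup>2 \<le> K\<^sup>2"
proof -
  have "\<bar>H x\<bar> \<le> K"
    using assms unfolding assumption_A_def C2alpha_bounded_def by blast
  then have "\<bar>H x\<bar>\<^sup>2 \<le> K\<^sup>2"
    by (intro power_mono) simp_all
  then show ?thesis
    by simp
qed

lemma fst_sch_square_le:
  fixes ys :: "(real^'d::finite) list" and T \<Lambda> c1 c2 :: real and N :: nat
  defines "h \<equiv> T / real N"
    and "C \<equiv> 12 * \<Lambda>\<^sup>2 * c2 + 1 + 12 * \<Lambda>\<^sup>2 * c1\<^sup>2 + 6 * \<Lambda>\<^sup>2"
  assumes A: "assumption_A b f \<sigma> H L \<Lambda> lam \<alpha> K" and ys: "ys \<noteq> []"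
    and h: "0 < h" "h * (12 * \<Lambda>\<^sup>2 * c2 + 1) \<le> 1" and c2: "0 \<le> c2"
    and G2: "(\<integral>z. (norm (gq ys h z))\<^sup>2 \<partial>gauss) \<le> c2 * h"
    and G1: "norm (\<integral>z. gq ys h z \<partial>gauss) \<le> c1 * h"
  shows "(fst (sch b f \<sigma> H T N ys \<delta> R \<rho> j) x)\<^sup>2 + 1 \<le> (K\<^sup>2 + 1) * (1 + C * h) ^ j"
proof (induction j arbitrary: x)
  case 0
  then show ?case
    using assumption_A_H_bounded[OF A] by simp
next
  case (Suc j)
  define u where "u = fst (sch b f \<sigma> H T N ys \<delta> R \<rho> j)"
  define A0 where "A0 = (K\<^sup>2 + 1) * (1 + C * h) ^ j - 1"
  have u: "(u x')\<^sup>2 \<le> A0" for x'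
    using Suc.IH[of x'] by (simp add: u_def A0_def)
  interpret gauss: prob_space "gauss :: (real^'d) measure"
    by (rule prob_space_gauss)
  have "(fst (sch b f \<sigma> H T N ys \<delta> R \<rho> (Suc j)) x)\<^sup>2 \<le> A0 + C * h * (A0 + 1)"
    unfolding fst_sch_Suc Let_def h_def[symmetric] u_def[symmetric] C_def
    by (rule gauss.perturbed_mean_square_le[OF measurable_comp_gq measurable_comp_gq u
          norm_gq_le[OF ys] G2 G1 u assumption_A_f_growth[OF A] h c2])
  then show ?case
    by (simp add: A0_def algebra_simps)
qed

lemma ubar_square_le:
  fixes ys :: "(real^'d::finite) list" and N :: nat and T \<Lambda> :: real and Cq :: "real \<Rightarrow> real"
  defines "c2 \<equiv> 2 * (Cq 2)\<^sup>2 + 2 * real CARD('d)"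
  assumes A: "assumption_A b f \<sigma> H L \<Lambda> lam \<alpha> K" and N: "1 \<le> N" and T: "0 < T" and ys: "ys \<noteq> []"
    and quantization_error: "\<forall>q \<ge> 1. (\<integral>z. norm (gq ys (T / real N) z - sqrt (T / real N) *\<^sub>R z) powr q \<partial>gauss) powr (1 / q)
                 \<le> Cq q * sqrt (T / real N) * real (length ys) powr (- 1 / real CARD('d))"
    and small_step: "T / real N < 1 / (12 * \<Lambda>\<^sup>2 * c2 + 1)"
    and fine_quantization: "real (length ys) powr (- 2 / real CARD('d)) < T / real N"
    and i: "i \<le> N"
  shows "(ubar b f \<sigma> H T N ys \<delta> R \<rho> i x)\<^sup>2
         \<le> (K\<^sup>2 + 1) * exp ((12 * \<Lambda>\<^sup>2 * c2 + 1 + 12 * \<Lambda>\<^sup>2 * (Cq 1)\<^sup>2 + 6 * \<Lambda>\<^sup>2) * T)"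
proof -
  define h where "h = T / real N"
  define C where "C = 12 * \<Lambda>\<^sup>2 * c2 + 1 + 12 * \<Lambda>\<^sup>2 * \<bar>Cq 1\<bar>\<^sup>2 + 6 * \<Lambda>\<^sup>2"
  have c2: "0 \<le> c2" and C: "0 \<le> C"
    by (simp_all add: c2_def C_def)
  have "0 < 12 * \<Lambda>\<^sup>2 * c2 + 1"
    using c2 by (simp add: add_nonneg_pos)
  then have h: "0 < h" "h * (12 * \<Lambda>\<^sup>2 * c2 + 1) \<le> 1"
    using N T small_step pos_less_divide_eq[of "12 * \<Lambda>\<^sup>2 * c2 + 1" "T / real N" 1]
    by (simp_all add: h_def)
  moreover have "h \<le> h * (12 * \<Lambda>\<^sup>2 * c2 + 1)"
    using h(1) c2 by (simp add: algebra_simps)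
  ultimately have "h \<le> 1"
    by linarith
  note quantization = ys h(1) \<open>h \<le> 1\<close> quantization_error[folded h_def] fine_quantization[folded h_def]
  have "(ubar b f \<sigma> H T N ys \<delta> R \<rho> i x)\<^sup>2 + 1 \<le> (K\<^sup>2 + 1) * (1 + C * h) ^ (N - i)"
    unfolding ubar_def h_def C_def
    by (rule fst_sch_square_le[OF A ys])
      (use h c2 integral_norm_gq_sq_le[OF quantization] norm_integral_gq_le[OF quantization]
        in \<open>simp_all add: h_def c2_def\<close>)
  also have "\<dots> \<le> (K\<^sup>2 + 1) * exp (C * T)"
    using power_one_plus_le_exp[OF C T N i] by (intro mult_left_mono) (simp_all add: h_def)
  finally show ?thesis
    by (simp add: C_def)
qed

theorem proposition6p1:
  fixes p T L Lam lam \<alpha> K :: real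
    and Cq :: "real \<Rightarrow> real"
  assumes "p \<ge> 2" and "T > 0" and "L \<ge> 0" and "Lam \<ge> 0" and "lam > 0"
    and "0 < \<alpha>" and "\<alpha> < 1" and "K \<ge> 0"
  shows "\<exists>c C. c > 0 \<and> C > 0 \<and>
    (\<forall>(b :: real^'d::finite \<Rightarrow> real \<Rightarrow> real^'d \<Rightarrow> real^'d) f \<sigma> H (N::nat) (ys :: (real^'d) list) \<delta> R \<rho>.
       assumption_A b f \<sigma> H L Lam lam \<alpha> K \<longrightarrow>
       N \<ge> 1 \<longrightarrow> ys \<noteq> [] \<longrightarrow> \<delta> > 0 \<longrightarrow> R > 0 \<longrightarrow>
       (\<forall>q \<ge> 1. (\<integral>z. norm (gq ys (T / real N) z - sqrt (T / real N) *\<^sub>R z) powr q \<partial>gauss) powr (1 / q)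
                 \<le> Cq q * sqrt (T / real N) * real (length ys) powr (- 1 / real CARD('d))) \<longrightarrow>
       T / real N < c \<longrightarrow> \<delta>\<^sup>2 < T / real N \<longrightarrow>
       real (length ys) powr (- 2 / real CARD('d)) < T / real N \<longrightarrow> \<rho> \<ge> 1 \<longrightarrow>
       (\<forall>i \<le> N. \<forall>x \<in> C_grid \<delta> R \<rho> i. (ubar b f \<sigma> H T N ys \<delta> R \<rho> i x)\<^sup>2 \<le> C))"
proof -
  define c2 where "c2 = 2 * (Cq 2)\<^sup>2 + 2 * real CARD('d)"
  define C where "C = (K\<^sup>2 + 1) * exp ((12 * Lam\<^sup>2 * c2 + 1 + 12 * Lam\<^sup>2 * (Cq 1)\<^sup>2 + 6 * Lam\<^sup>2) * T)"
  have "0 < 1 / (12 * Lam\<^sup>2 * c2 + 1)" "0 < C"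
    by (simp_all add: c2_def C_def add_nonneg_pos)
  then show ?thesis
    using ubar_square_le[where Cq = Cq and \<Lambda> = Lam and T = T and L = L and lam = lam and \<alpha> = \<alpha> and K = K]
      \<open>T > 0\<close>
    unfolding c2_def C_def by blast
qed

end
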